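(* Let $D$ be a positive integer and let $H$ be a loopless multigraph such that each edge of $H$ shares at least one endpoint with all but at most $D-2$ of the other edges of $H$, and let $H_0$ be its underlying simple graph. (i) If $H_0$ is the complete graph $K_h$ with $h\ge 6$, then $|E(H)|\le \frac52(D-2)$. (ii) If $H_0$ is $K_h$ minus one edge with $h\ge 7$, then $|E(H)|\le \frac{20}{9}(D-2)$. (iii) If $H_0$ is $K_6$ minus one edge, then $|E(H)|\le \frac{22}{9}(D-2)$.
   Context: The underlying simple graph $H_0$ of a multigraph $H$ has vertex set $V(H)$ and an edge $vw$ whenever $H$ has at least one edge between $v$ and $w$. $K_h$ denotes the complete graph on $h$ vertices. *)

theory Defs
  imports Complex_Main
begin

definition loopless_multigraph :: "'a set \<Rightarrow> 'e set \<Rightarrow> ('e \<Rightarrow> 'a set) \<Rightarrow> bool" where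
  "loopless_multigraph V E ends \<longleftrightarrow> finite V \<and> finite E \<and>
     (\<forall>e\<in>E. ends e \<subseteq> V \<and> card (ends e) = 2)"

definition underlying_edges :: "'e set \<Rightarrow> ('e \<Rightarrow> 'a set) \<Rightarrow> 'a set set" where
  "underlying_edges E ends = ends ` E"

definition is_complete_graph :: "'a set \<Rightarrow> 'a set set \<Rightarrow> nat \<Rightarrow> bool" where
  "is_complete_graph V F h \<longleftrightarrow> card V = h \<and> F = {{v, w} | v w. v \<in> V \<and> w \<in> V \<and> v \<noteq> w}"

definition is_complete_minus_edge :: "'a set \<Rightarrow> 'a set set \<Rightarrow> nat \<Rightarrow> bool" where
  "is_complete_minus_edge V F h \<longleftrightarrow> card V = h \<and>
     (\<exists>x y. x \<in> V \<and> y \<in> V \<and> x \<noteq> y \<and>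
        F = {{v, w} | v w. v \<in> V \<and> w \<in> V \<and> v \<noteq> w} - {{x, y}})"

definition meets_all_but :: "'e set \<Rightarrow> ('e \<Rightarrow> 'a set) \<Rightarrow> int \<Rightarrow> bool" where
  "meets_all_but E ends k \<longleftrightarrow>
     (\<forall>e\<in>E. int (card {f \<in> E. f \<noteq> e \<and> ends f \<inter> ends e = {}}) \<le> k)"

end

theory Submission
  imports Defs
begin

text \<open>Double count the pairs (q, f) with q a pair of adjacent vertices of H_0 taken from a
  chosen set G and f an edge of H disjoint from q. Since q is the vertex set of some edge of H, at
  most D - 2 edges f avoid it; conversely every edge f avoids (h - 2 choose 2) pairs of K_h, and at
  most one fewer in K_h minus an edge. Comparing the two counts gives (i) and (ii). For K_6 minus
  the edge xy, weight the 6 pairs inside V - {x, y} by 1 and the other 8 present pairs by 2: every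
  edge of H avoids pairs of total weight at least 9, while the total weight is 22.\<close>

definition two_subsets :: "'a set \<Rightarrow> 'a set set" where
  "two_subsets S = {q. q \<subseteq> S \<and> card q = 2}"

lemma card_two_subsets: "finite S \<Longrightarrow> card (two_subsets S) = card S choose 2"
  unfolding two_subsets_def by (rule n_subsets)

lemma finite_two_subsets: "finite S \<Longrightarrow> finite (two_subsets S)"
  unfolding two_subsets_def by (rule finite_subset[of _ "Pow S"]) auto

lemma doubleton_in_two_subsets: "x \<in> S \<Longrightarrow> y \<in> S \<Longrightarrow> x \<noteq> y \<Longrightarrow> {x, y} \<in> two_subsets S"
  unfolding two_subsets_def by auto

lemma complete_edges_eq_two_subsets:
  "{{v, w} | v w. v \<in> V \<and> w \<in> V \<and> v \<noteq> w} = two_subsets V"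
  unfolding two_subsets_def by (auto simp: card_2_iff)

lemma two_subsets_disjoint_eq: "{q \<in> two_subsets S. q \<inter> A = {}} = two_subsets (S - A)"
  unfolding two_subsets_def by auto

lemma two_mult_choose_two: "2 * (n choose 2) = n * (n - 1)"
proof -
  have "even (n * (n - 1))" by (cases n) auto
  thus ?thesis by (simp add: choose_two)
qed

lemma loopless_multigraph_finite:
  "loopless_multigraph V E ends \<Longrightarrow> finite V \<and> finite E"
  unfolding loopless_multigraph_def by auto

lemma loopless_multigraph_ends:
  "loopless_multigraph V E ends \<Longrightarrow> f \<in> E \<Longrightarrow> ends f \<subseteq> V \<and> card (ends f) = 2"
  unfolding loopless_multigraph_def by auto

lemma finite_underlying_edges:
  "loopless_multigraph V E ends \<Longrightarrow> finite (underlying_edges E ends)"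
  unfolding loopless_multigraph_def underlying_edges_def by simp

lemma card_two_subsets_avoiding_edge:
  assumes "loopless_multigraph V E ends" and "f \<in> E"
  shows "card {q \<in> two_subsets V. q \<inter> ends f = {}} = (card V - 2) choose 2"
proof -
  have "finite V" using assms(1) by (simp add: loopless_multigraph_finite)
  moreover have "ends f \<subseteq> V" "card (ends f) = 2" using loopless_multigraph_ends[OF assms] by auto
  ultimately show ?thesis
    by (simp add: two_subsets_disjoint_eq card_two_subsets card_Diff_subset finite_subset)
qed

lemma sum_card_disjoint_swap:
  assumes "finite E" "finite G"
  shows "(\<Sum>q\<in>G. card {f\<in>E. ends f \<inter> q = {}}) = (\<Sum>f\<in>E. card {q\<in>G. q \<inter> ends f = {}})"
proof -
  have "(\<Sum>q\<in>G. card {f\<in>E. ends f \<inter> q = {}}) = (\<Sum>q\<in>G. \<Sum>f\<in>E. of_bool (ends f \<inter> q = {}))"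
    using assms(1) by (simp add: sum_of_bool_eq Collect_conj_eq Int_commute)
  also have "\<dots> = (\<Sum>f\<in>E. \<Sum>q\<in>G. of_bool (q \<inter> ends f = {}))"
    by (subst sum.swap) (simp only: Int_commute)
  also have "\<dots> = (\<Sum>f\<in>E. card {q\<in>G. q \<inter> ends f = {}})"
    using assms(2) by (simp add: sum_of_bool_eq Collect_conj_eq Int_commute)
  finally show ?thesis .
qed

lemma card_edges_disjoint_from_underlying_le:
  assumes "loopless_multigraph V E ends" and "meets_all_but E ends K"
    and "q \<in> underlying_edges E ends"
  shows "int (card {f\<in>E. ends f \<inter> q = {}}) \<le> K"
proof -
  from assms(3) obtain e where e: "e \<in> E" "q = ends e" unfolding underlying_edges_def by auto
  have "ends e \<noteq> {}" using loopless_multigraph_ends[OF assms(1) e(1)] by auto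
  hence "{f\<in>E. ends f \<inter> q = {}} = {f\<in>E. f \<noteq> e \<and> ends f \<inter> ends e = {}}" using e by auto
  thus ?thesis using assms(2) e unfolding meets_all_but_def by auto
qed

lemma sum_card_edges_disjoint_le:
  assumes "loopless_multigraph V E ends" and "meets_all_but E ends K"
    and "G \<subseteq> underlying_edges E ends"
  shows "int (\<Sum>q\<in>G. card {f\<in>E. ends f \<inter> q = {}}) \<le> int (card G) * K"
proof -
  have "(\<Sum>q\<in>G. int (card {f\<in>E. ends f \<inter> q = {}})) \<le> of_nat (card G) * K"
    by (rule sum_bounded_above)
       (use card_edges_disjoint_from_underlying_le[OF assms(1,2)] assms(3) in auto)
  thus ?thesis by simp
qed

lemma card_edges_le_by_double_counting:
  assumes "loopless_multigraph V E ends" and "meets_all_but E ends K"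
    and "G \<subseteq> underlying_edges E ends"
    and "\<And>f. f \<in> E \<Longrightarrow> m \<le> card {q\<in>G. q \<inter> ends f = {}}"
  shows "int (card E * m) \<le> int (card G) * K"
proof -
  have fin: "finite E" "finite G"
    using loopless_multigraph_finite[OF assms(1)]
      finite_subset[OF assms(3) finite_underlying_edges[OF assms(1)]] by auto
  have "card E * m \<le> (\<Sum>f\<in>E. card {q\<in>G. q \<inter> ends f = {}})"
    using sum_mono[of E "\<lambda>_. m"] assms(4) by simp
  also have "\<dots> = (\<Sum>q\<in>G. card {f\<in>E. ends f \<inter> q = {}})"
    by (rule sum_card_disjoint_swap[OF fin, symmetric])
  finally show ?thesis using sum_card_edges_disjoint_le[OF assms(1-3)] by linarith
qed

lemma card_edges_le_by_weighted_double_counting: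
  assumes "loopless_multigraph V E ends" and "meets_all_but E ends K"
    and "F \<subseteq> underlying_edges E ends" and "B \<subseteq> F"
    and "\<And>f. f \<in> E \<Longrightarrow> m + card {q\<in>B. q \<inter> ends f = {}} \<le> 2 * card {q\<in>F. q \<inter> ends f = {}}"
  shows "int (card E * m) \<le> int (card F + card (F - B)) * K"
proof -
  let ?d = "\<lambda>q. card {f\<in>E. ends f \<inter> q = {}}"
  have fE: "finite E" and fF: "finite F"
    using loopless_multigraph_finite[OF assms(1)]
      finite_subset[OF assms(3) finite_underlying_edges[OF assms(1)]] by auto
  have fB: "finite B" using fF assms(4) finite_subset by auto
  have "card E * m + (\<Sum>q\<in>B. ?d q) = (\<Sum>f\<in>E. m + card {q\<in>B. q \<inter> ends f = {}})"
    using sum_card_disjoint_swap[OF fE fB] by (simp add: sum.distrib)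
  also have "\<dots> \<le> (\<Sum>f\<in>E. 2 * card {q\<in>F. q \<inter> ends f = {}})"
    by (rule sum_mono) (rule assms(5))
  also have "\<dots> = 2 * (\<Sum>q\<in>F. ?d q)"
    using sum_card_disjoint_swap[OF fE fF] by (simp add: sum_distrib_left)
  also have "\<dots> = 2 * (\<Sum>q\<in>F - B. ?d q) + 2 * (\<Sum>q\<in>B. ?d q)"
    using sum.subset_diff[OF assms(4) fF, of ?d] by simp
  finally have "card E * m \<le> (\<Sum>q\<in>F. ?d q) + (\<Sum>q\<in>F - B. ?d q)"
    using sum.subset_diff[OF assms(4) fF, of ?d] by linarith
  hence "int (card E * m) \<le> int (\<Sum>q\<in>F. ?d q) + int (\<Sum>q\<in>F - B. ?d q)" by linarith
  also have "\<dots> \<le> int (card F) * K + int (card (F - B)) * K"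
    using sum_card_edges_disjoint_le[OF assms(1-3)]
      sum_card_edges_disjoint_le[OF assms(1,2), of "F - B"] assms(3) by fastforce
  finally show ?thesis by (simp add: distrib_right)
qed

lemma real_le_ratio_mult_of_nat_bound:
  fixes n a b :: nat and K :: int and p r :: real
  assumes "int (n * a) \<le> int b * K" and "p * b \<le> r * a" and "a > 0" and "b > 0" and "p > 0"
  shows "real n \<le> r / p * K"
proof -
  have "0 \<le> int b * K" using assms(1) by linarith
  hence K: "K \<ge> 0" using assms(4) by (simp add: zero_le_mult_iff)
  have nK: "real n * a \<le> b * K"
    using assms(1) by (metis of_int_le_iff of_int_mult of_int_of_nat_eq of_nat_mult)
  have "p * n * a \<le> p * b * K" using nK assms(5) by (simp add: mult.assoc)
  also have "\<dots> \<le> r * a * K" using assms(2) K by (intro mult_right_mono) simp_all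
  finally have "p * n \<le> r * K" using assms(3) by (simp add: mult.commute mult.left_commute)
  thus ?thesis using assms(5) by (simp add: pos_le_divide_eq mult.commute)
qed

lemma complete_pairs_vs_avoiding: "h \<ge> 6 \<Longrightarrow> 2 * (h choose 2) \<le> 5 * ((h - 2) choose 2)"
proof -
  assume "h \<ge> 6" then obtain k where "h = k + 6" by (metis le_add_diff_inverse2)
  hence "2 * (h * (h - 1)) \<le> 5 * ((h - 2) * (h - 2 - 1))" by (simp add: algebra_simps)
  thus ?thesis by (simp only: two_mult_choose_two[symmetric])
qed

lemma complete_minus_edge_pairs_vs_avoiding:
  "h \<ge> 7 \<Longrightarrow>
    9 * ((h choose 2) - 1) \<le> 20 * (((h - 2) choose 2) - 1) \<and> 1 < (h - 2) choose 2 \<and> 1 < h choose 2"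
proof -
  assume "h \<ge> 7" then obtain k where "h = k + 7" by (metis le_add_diff_inverse2)
  hence "9 * (h * (h - 1)) + 22 \<le> 20 * ((h - 2) * (h - 2 - 1)) \<and> 20 \<le> (h - 2) * (h - 2 - 1)
      \<and> 42 \<le> h * (h - 1)"
    by (simp add: algebra_simps)
  hence "9 * (2 * (h choose 2)) + 22 \<le> 20 * (2 * ((h - 2) choose 2))
      \<and> 20 \<le> 2 * ((h - 2) choose 2) \<and> 42 \<le> 2 * (h choose 2)"
    by (simp only: two_mult_choose_two)
  moreover have "18 * b + 22 \<le> 40 * a \<Longrightarrow> 20 \<le> 2 * a \<Longrightarrow> 42 \<le> 2 * b
      \<Longrightarrow> 9 * (b - 1) \<le> 20 * (a - 1) \<and> 1 < a \<and> 1 < b" for a b :: nat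
    by linarith
  ultimately show ?thesis by simp
qed

text \<open>An edge disjoint from xy avoids 5 present pairs and 1 pair inside V - {x, y}; an edge
  meeting xy in one vertex avoids 6 and 3; and 9 + 1 \<le> 2 * 5, 9 + 3 \<le> 2 * 6.\<close>
lemma six_vertices_avoiding_weight:
  assumes V: "finite V" "card V = 6" and xy: "x \<in> V" "y \<in> V" "x \<noteq> y"
    and e: "e \<subseteq> V" "card e = 2" "e \<noteq> {x, y}"
  shows "9 + card {q \<in> two_subsets (V - {x, y}). q \<inter> e = {}}
           \<le> 2 * card {q \<in> two_subsets V - {{x, y}}. q \<inter> e = {}}"
proof -
  have fe: "finite e" using e(2) by (metis card.infinite zero_neq_numeral)
  have inner: "{q \<in> two_subsets (V - {x, y}). q \<inter> e = {}} = two_subsets (V - ({x, y} \<union> e))"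
    by (simp add: two_subsets_disjoint_eq Diff_Un Diff_Int_distrib2 set_diff_eq)
  have outer: "{q \<in> two_subsets V - {{x, y}}. q \<inter> e = {}} = two_subsets (V - e) - {{x, y}}"
    using two_subsets_disjoint_eq[of V e] by auto
  have card_outer_all: "card (two_subsets (V - e)) = 6"
    using V e fe by (simp add: card_two_subsets card_Diff_subset choose_two)
  have card_inner: "card (two_subsets (V - ({x, y} \<union> e))) = (6 - card ({x, y} \<union> e)) choose 2"
    using V e xy fe by (simp add: card_two_subsets card_Diff_subset)
  have cUI: "card ({x, y} \<union> e) + card ({x, y} \<inter> e) = 4"
    using card_Un_Int[of "{x, y}" e] fe e xy by simp
  show ?thesis
  proof (cases "{x, y} \<inter> e = {}")
    case True
    hence "{x, y} \<in> two_subsets (V - e)" using xy by (auto intro: doubleton_in_two_subsets)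
    thus ?thesis using True cUI unfolding inner outer card_inner
      by (simp add: card_outer_all card_Diff_singleton_if)
  next
    case False
    have "card ({x, y} \<inter> e) \<noteq> 2"
    proof
      assume c2: "card ({x, y} \<inter> e) = 2"
      have "{x, y} \<inter> e = {x, y}" by (rule card_subset_eq) (use c2 xy in auto)
      moreover have "{x, y} \<inter> e = e" by (rule card_subset_eq) (use c2 e fe in auto)
      ultimately show False using e(3) by simp
    qed
    moreover have "card ({x, y} \<inter> e) \<noteq> 0" and "card ({x, y} \<inter> e) \<le> 2"
      using False fe card_mono[OF fe, of "{x, y} \<inter> e"] e by auto
    ultimately have "card ({x, y} \<union> e) = 3" using cUI by linarith
    moreover have "{x, y} \<notin> two_subsets (V - e)" using False unfolding two_subsets_def by auto
    ultimately show ?thesis unfolding inner outer card_inner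
      by (simp add: card_outer_all choose_two)
  qed
qed

lemma card_edges_complete_le:
  assumes lm: "loopless_multigraph V E ends" and m: "meets_all_but E ends K"
    and h: "h \<ge> 6" and H0: "is_complete_graph V (underlying_edges E ends) h"
  shows "real (card E) \<le> 5 / 2 * real_of_int K"
proof -
  have V: "card V = h" "underlying_edges E ends = two_subsets V"
    using H0 complete_edges_eq_two_subsets[of V] unfolding is_complete_graph_def by auto
  have fV: "finite V" using loopless_multigraph_finite[OF lm] by simp
  have "int (card E * ((h - 2) choose 2)) \<le> int (h choose 2) * K"
    using card_edges_le_by_double_counting[OF lm m, of "two_subsets V" "(h - 2) choose 2"]
      card_two_subsets_avoiding_edge[OF lm] card_two_subsets[OF fV] V
    by simp
  moreover have "2 * real (h choose 2) \<le> 5 * real ((h - 2) choose 2)"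
    using complete_pairs_vs_avoiding[OF h] by linarith
  moreover have "(h - 2) choose 2 > 0" "h choose 2 > 0" using h by simp_all
  ultimately show ?thesis by (rule real_le_ratio_mult_of_nat_bound) simp
qed

lemma card_edges_complete_minus_edge_le:
  assumes lm: "loopless_multigraph V E ends" and m: "meets_all_but E ends K"
    and h: "h \<ge> 7" and H0: "is_complete_minus_edge V (underlying_edges E ends) h"
  shows "real (card E) \<le> 20 / 9 * real_of_int K"
proof -
  obtain x y where xy: "x \<in> V" "y \<in> V" "x \<noteq> y" and V: "card V = h"
    and F: "underlying_edges E ends = two_subsets V - {{x, y}}"
    using H0 complete_edges_eq_two_subsets[of V] unfolding is_complete_minus_edge_def by auto
  have fV: "finite V" using loopless_multigraph_finite[OF lm] by simp
  have "((h - 2) choose 2) - 1 \<le> card {q \<in> two_subsets V - {{x, y}}. q \<inter> ends f = {}}"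
    if "f \<in> E" for f
  proof -
    let ?A = "{q \<in> two_subsets V. q \<inter> ends f = {}}"
    have "((h - 2) choose 2) - 1 = card ?A - card {{x, y}}"
      using card_two_subsets_avoiding_edge[OF lm that] V by simp
    also have "\<dots> \<le> card (?A - {{x, y}})" by (rule diff_card_le_card_Diff) simp
    also have "?A - {{x, y}} = {q \<in> two_subsets V - {{x, y}}. q \<inter> ends f = {}}" by auto
    finally show ?thesis .
  qed
  hence "int (card E * (((h - 2) choose 2) - 1)) \<le> int ((h choose 2) - 1) * K"
    using card_edges_le_by_double_counting[OF lm m, of "two_subsets V - {{x, y}}"] F V fV
      doubleton_in_two_subsets[OF xy] by (simp add: card_two_subsets)
  moreover have "9 * real ((h choose 2) - 1) \<le> 20 * real (((h - 2) choose 2) - 1)"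
    and "((h - 2) choose 2) - 1 > 0" and "(h choose 2) - 1 > 0"
    using complete_minus_edge_pairs_vs_avoiding[OF h] by linarith+
  ultimately show ?thesis by (rule real_le_ratio_mult_of_nat_bound) simp
qed

lemma card_edges_K6_minus_edge_le:
  assumes lm: "loopless_multigraph V E ends" and m: "meets_all_but E ends K"
    and H0: "is_complete_minus_edge V (underlying_edges E ends) 6"
  shows "real (card E) \<le> 22 / 9 * real_of_int K"
proof -
  obtain x y where xy: "x \<in> V" "y \<in> V" "x \<noteq> y" and V: "card V = 6"
    and F: "underlying_edges E ends = two_subsets V - {{x, y}}"
    using H0 complete_edges_eq_two_subsets[of V] unfolding is_complete_minus_edge_def by auto
  have fV: "finite V" using loopless_multigraph_finite[OF lm] by simp
  define B where "B = two_subsets (V - {x, y})"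
  have BF: "B \<subseteq> two_subsets V - {{x, y}}" unfolding B_def two_subsets_def by auto
  have cF: "card (two_subsets V - {{x, y}}) = 14"
    using doubleton_in_two_subsets[OF xy] fV V by (simp add: card_two_subsets choose_two)
  have "card B = 6"
    using fV V xy unfolding B_def by (simp add: card_two_subsets card_Diff_subset choose_two)
  hence cFB: "card (two_subsets V - {{x, y}} - B) = 8"
    using cF BF card_Diff_subset[OF finite_subset[OF BF] BF] fV by (simp add: finite_two_subsets)
  have weight: "9 + card {q\<in>B. q \<inter> ends f = {}}
      \<le> 2 * card {q \<in> two_subsets V - {{x, y}}. q \<inter> ends f = {}}" if "f \<in> E" for f
  proof -
    have "ends f \<in> underlying_edges E ends" using that unfolding underlying_edges_def by simp
    hence "ends f \<noteq> {x, y}" using F by simp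
    thus ?thesis
      using six_vertices_avoiding_weight[OF fV V xy] loopless_multigraph_ends[OF lm that]
      unfolding B_def by blast
  qed
  have "int (card E * 9) \<le> int (14 + 8) * K"
    using card_edges_le_by_weighted_double_counting[OF lm m _ BF weight] F cF cFB by simp
  thus ?thesis by (rule real_le_ratio_mult_of_nat_bound) simp_all
qed

theorem mainTheorem6:
  fixes V :: "'a set" and E :: "'e set" and ends :: "'e \<Rightarrow> 'a set" and D :: nat
  assumes "D > 0"
    and "loopless_multigraph V E ends"
    and "meets_all_but E ends (int D - 2)"
  shows "(\<forall>h. h \<ge> 6 \<and> is_complete_graph V (underlying_edges E ends) h
              \<longrightarrow> real (card E) \<le> 5 / 2 * (real D - 2))
       \<and> (\<forall>h. h \<ge> 7 \<and> is_complete_minus_edge V (underlying_edges E ends) h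
              \<longrightarrow> real (card E) \<le> 20 / 9 * (real D - 2))
       \<and> (is_complete_minus_edge V (underlying_edges E ends) 6
              \<longrightarrow> real (card E) \<le> 22 / 9 * (real D - 2))"
proof -
  have K: "real_of_int (int D - 2) = real D - 2" by simp
  show ?thesis
    using card_edges_complete_le[OF assms(2,3)] card_edges_complete_minus_edge_le[OF assms(2,3)]
      card_edges_K6_minus_edge_le[OF assms(2,3)]
    unfolding K by blast
qed

end
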